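(* Let $\mathcal X,\mathcal Y$ be nonempty convex compact sets and $\mathcal L:\mathcal X\times\mathcal Y\to\mathbb R$ a differentiable, uniformly strongly convex-concave function with saddle point $(x^*,y^* )$, and let $z=(x,y)\in\mathcal X\times\mathcal Y$. (I) If $(x^*,y^* )$ lies in the relative interior of $\mathcal X\times\mathcal Y$ and $\mu^{int}_{\mathcal L}>0$ (with reference point $(x^*,y^* )$), then $w(z)\le\frac{(g^{FW}(z))^2}{2\mu^{int}_{\mathcal L}}$. (P) If $\mathcal X=\mathrm{conv}(\mathcal A)$, $\mathcal Y=\mathrm{conv}(\mathcal B)$ with $\mathcal A,\mathcal B$ finite and $\mu^A_{\mathcal L}>0$, then for any active set expansion of $z$, $w(z)\le h(z)\le\frac{(g^{PFW}(z))^2}{2\mu^A_{\mathcal L}}$, where $g^{PFW}(z)$ is computed with respect to that expansion.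
   Context: Convex-concave: $\mathcal L(\cdot,y)$ convex, $\mathcal L(x,\cdot)$ concave. Uniformly strongly convex-concave: there are $\mu_{\mathcal X},\mu_{\mathcal Y}>0$ with $\mathcal L(\cdot,y)$ $\mu_{\mathcal X}$-strongly convex for every $y$ and $-\mathcal L(x,\cdot)$ $\mu_{\mathcal Y}$-strongly convex for every $x$. Saddle point: $\mathcal L(x^*,y)\le\mathcal L(x^*,y^* )\le\mathcal L(x,y^* )$ for all $x,y$. For $z=(x,y)$: $r(z):=(\nabla_x\mathcal L(z),-\nabla_y\mathcal L(z))$, $h(z):=\max_{y'}\mathcal L(x,y')-\min_{x'}\mathcal L(x',y)$, $w(z):=\mathcal L(x,y^* )-\mathcal L(x^*,y)$, $s(z)\in\arg\min_{s\in\mathcal X\times\mathcal Y}\langle s,r(z)\rangle$, $g^{FW}(z):=\langle z-s(z),r(z)\rangle$. Active set expansion: weights $\alpha>0$ on $S_x\subseteq\mathcal A$ and on $S_y\subseteq\mathcal B$, each summing to one, with $x=\sum_{v\in S_x}\alpha_vv$, $y=\sum_{v\in S_y}\alpha_vv$; then $v\in\arg\max_{v\in S_x\times S_y}\langle r(z),v\rangle$ and $g^{PFW}(z):=\langle v-s(z),r(z)\rangle$. $\mathcal F:=\{\mathcal L(\cdot,y):y\in\mathcal Y\}$, $\mathcal G:=\{-\mathcal L(x,\cdot):x\in\mathcal X\}$. Interior strong convexity of $f$ on $\mathcal K$ w.r.t. $x_c$ in its relative interior: $\mu_f^{x_c}:=\inf\frac2{\gamma^2}(f(u)-f(x)-\langle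 u-x,\nabla f(x)\rangle)$ over $x\in\mathcal K\setminus\{x_c\}$, $\gamma\in(0,1]$, $u=x+\gamma(s-x)$ where $s$ is where the ray from $x$ through $x_c$ meets the relative boundary of $\mathcal K$; $\mu^{int}_{\mathcal L}:=\min\{\inf_{f\in\mathcal F}\mu_f^{x^*},\inf_{g\in\mathcal G}\mu_g^{y^*}\}$. Geometric strong convexity of $f$ on $\mathcal K=\mathrm{conv}(\mathcal A)$: for $x\in\mathcal K$, $\mathcal S_x$ = family of $S\subseteq\mathcal A$ such that $x$ is a convex combination of all elements of $S$ with positive coefficients, $v_S(x)\in\arg\max_{v\in S}\langle\nabla f(x),v\rangle$, $v_f(x)\in\arg\min\{\langle\nabla f(x),v\rangle:v=v_S(x),S\in\mathcal S_x\}$, $s_f(x)\in\arg\min_{v\in\mathcal A}\langle\nabla f(x),v\rangle$, $\gamma^A(x,x'):=\frac{\langle-\nabla f(x),x'-x\rangle}{\langle-\nabla f(x),s_f(x)-v_f(x)\rangle}$, $\mu^A_f:=\inf_{x\in\mathcal K}\inf_{x':\langle\nabla f(x),x'-x\rangle<0}\frac2{\gamma^A(x,x')^2}(f(x')-f(x)-\langle x'-x,\nabla f(x)\rangle)$; $\mu^A_{\mathcal L}:=\min\{\inf_{f\in\mathcal F}\mu^A_f\text{ (over }\mathcal A),\inf_{g\in\mathcal G}\mu^A_g\text{ (over }\mathcal B)\}$. *)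

theory Defs
  imports "HOL-Analysis.Analysis"
begin

definition strongly_convex_on :: "real \<Rightarrow> 'a::real_inner set \<Rightarrow> ('a \<Rightarrow> real) \<Rightarrow> bool" where
  "strongly_convex_on \<mu> K f \<longleftrightarrow>
     (\<forall>u\<in>K. \<forall>v\<in>K. \<forall>t::real. 0 \<le> t \<and> t \<le> 1 \<longrightarrow>
        f (t *\<^sub>R u + (1 - t) *\<^sub>R v)
          \<le> t * f u + (1 - t) * f v - \<mu> / 2 * t * (1 - t) * (norm (u - v))\<^sup>2)"

definition saddle_point :: "'a set \<Rightarrow> 'b set \<Rightarrow> ('a \<Rightarrow> 'b \<Rightarrow> real) \<Rightarrow> 'a \<Rightarrow> 'b \<Rightarrow> bool" where
  "saddle_point X Y L xs ys \<longleftrightarrow> xs \<in> X \<and> ys \<in> Y \<and>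
     (\<forall>x\<in>X. \<forall>y\<in>Y. L xs y \<le> L xs ys \<and> L xs ys \<le> L x ys)"

definition ray_exit :: "'a::real_vector set \<Rightarrow> 'a \<Rightarrow> 'a \<Rightarrow> 'a" where
  "ray_exit K x xc = x + Sup {t. 0 \<le> t \<and> x + t *\<^sub>R (xc - x) \<in> K} *\<^sub>R (xc - x)"

definition mu_int :: "'a::real_inner set \<Rightarrow> ('a \<Rightarrow> real) \<Rightarrow> ('a \<Rightarrow> 'a) \<Rightarrow> 'a \<Rightarrow> ereal" where
  "mu_int K f gf xc = Inf {ereal (2 / \<gamma>\<^sup>2 * (f u - f x - (u - x) \<bullet> gf x)) | x \<gamma> u.
      x \<in> K - {xc} \<and> 0 < \<gamma> \<and> \<gamma> \<le> 1 \<and> u = x + \<gamma> *\<^sub>R (ray_exit K x xc - x)}"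

definition active_sets :: "'a::real_vector set \<Rightarrow> 'a \<Rightarrow> 'a set set" where
  "active_sets A x = {S. S \<subseteq> A \<and> S \<noteq> {} \<and> (\<exists>\<alpha>. (\<forall>v\<in>S. 0 < \<alpha> v) \<and> sum \<alpha> S = 1 \<and>
        x = (\<Sum>v\<in>S. \<alpha> v *\<^sub>R v))}"

text \<open>Here  <gf x, v_f x>  = Min over S in S_x of Max over v in S of <gf x, v>,
  and   <gf x, s_f x>  = Min over v in A of <gf x, v>.\<close>
definition gamma_A :: "'a::real_inner set \<Rightarrow> ('a \<Rightarrow> 'a) \<Rightarrow> 'a \<Rightarrow> 'a \<Rightarrow> real" where
  "gamma_A A gf x x' =
     (- gf x \<bullet> (x' - x)) /
     ((Min ((\<lambda>S. Max ((\<lambda>v. gf x \<bullet> v) ` S)) ` active_sets A x)) - Min ((\<lambda>v. gf x \<bullet> v) ` A))"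

definition mu_geo :: "'a::real_inner set \<Rightarrow> ('a \<Rightarrow> real) \<Rightarrow> ('a \<Rightarrow> 'a) \<Rightarrow> ereal" where
  "mu_geo A f gf = Inf {ereal (2 / (gamma_A A gf x x')\<^sup>2 * (f x' - f x - (x' - x) \<bullet> gf x)) | x x'.
      x \<in> convex hull A \<and> x' \<in> convex hull A \<and> gf x \<bullet> (x' - x) < 0}"

definition r_op :: "('a \<Rightarrow> 'b \<Rightarrow> 'a) \<Rightarrow> ('a \<Rightarrow> 'b \<Rightarrow> 'b) \<Rightarrow> 'a \<times> 'b \<Rightarrow> 'a \<times> 'b::uminus" where
  "r_op Gx Gy z = (Gx (fst z) (snd z), - Gy (fst z) (snd z))"

definition w_gap :: "('a \<Rightarrow> 'b \<Rightarrow> real) \<Rightarrow> 'a \<Rightarrow> 'b \<Rightarrow> 'a \<times> 'b \<Rightarrow> real" where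
  "w_gap L xs ys z = L (fst z) ys - L xs (snd z)"

definition h_gap :: "'a set \<Rightarrow> 'b set \<Rightarrow> ('a \<Rightarrow> 'b \<Rightarrow> real) \<Rightarrow> 'a \<times> 'b \<Rightarrow> real" where
  "h_gap X Y L z = (SUP y'\<in>Y. L (fst z) y') - (INF x'\<in>X. L x' (snd z))"

definition mu_int_L :: "'a::real_inner set \<Rightarrow> 'b::real_inner set \<Rightarrow> ('a \<Rightarrow> 'b \<Rightarrow> real)
    \<Rightarrow> ('a \<Rightarrow> 'b \<Rightarrow> 'a) \<Rightarrow> ('a \<Rightarrow> 'b \<Rightarrow> 'b) \<Rightarrow> 'a \<Rightarrow> 'b \<Rightarrow> ereal" where
  "mu_int_L X Y L Gx Gy xs ys =
     min (INF y\<in>Y. mu_int X (\<lambda>a. L a y) (\<lambda>a. Gx a y) xs)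
         (INF x\<in>X. mu_int Y (\<lambda>b. - L x b) (\<lambda>b. - Gy x b) ys)"

definition mu_geo_L :: "'a::real_inner set \<Rightarrow> 'b::real_inner set \<Rightarrow> 'a set \<Rightarrow> 'b set \<Rightarrow> ('a \<Rightarrow> 'b \<Rightarrow> real)
    \<Rightarrow> ('a \<Rightarrow> 'b \<Rightarrow> 'a) \<Rightarrow> ('a \<Rightarrow> 'b \<Rightarrow> 'b) \<Rightarrow> ereal" where
  "mu_geo_L X Y A B L Gx Gy =
     min (INF y\<in>Y. mu_geo A (\<lambda>a. L a y) (\<lambda>a. Gx a y))
         (INF x\<in>X. mu_geo B (\<lambda>b. - L x b) (\<lambda>b. - Gy x b))"

definition is_fw_vertex :: "'a set \<Rightarrow> 'b set \<Rightarrow> ('a \<times> 'b::real_inner) \<Rightarrow> ('a::real_inner) \<times> 'b \<Rightarrow> bool" where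
  "is_fw_vertex X Y rz s \<longleftrightarrow> s \<in> X \<times> Y \<and> (\<forall>s'\<in>X \<times> Y. s \<bullet> rz \<le> s' \<bullet> rz)"

definition g_FW :: "('a::real_inner) \<times> ('b::real_inner) \<Rightarrow> 'a \<times> 'b \<Rightarrow> 'a \<times> 'b \<Rightarrow> real" where
  "g_FW z rz s = (z - s) \<bullet> rz"

definition active_expansion :: "'a set \<Rightarrow> 'b set \<Rightarrow> 'a::real_vector \<times> 'b::real_vector
    \<Rightarrow> 'a set \<Rightarrow> 'b set \<Rightarrow> ('a \<Rightarrow> real) \<Rightarrow> ('b \<Rightarrow> real) \<Rightarrow> bool" where
  "active_expansion A B z Sx Sy \<alpha> \<beta> \<longleftrightarrow>
     Sx \<subseteq> A \<and> Sy \<subseteq> B \<and>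
     (\<forall>u\<in>Sx. 0 < \<alpha> u) \<and> sum \<alpha> Sx = 1 \<and> fst z = (\<Sum>u\<in>Sx. \<alpha> u *\<^sub>R u) \<and>
     (\<forall>u\<in>Sy. 0 < \<beta> u) \<and> sum \<beta> Sy = 1 \<and> snd z = (\<Sum>u\<in>Sy. \<beta> u *\<^sub>R u)"

definition is_away_vertex :: "'a set \<Rightarrow> 'b set \<Rightarrow> ('a::real_inner) \<times> ('b::real_inner) \<Rightarrow> 'a \<times> 'b \<Rightarrow> bool" where
  "is_away_vertex Sx Sy rz v \<longleftrightarrow> v \<in> Sx \<times> Sy \<and> (\<forall>v'\<in>Sx \<times> Sy. v' \<bullet> rz \<le> v \<bullet> rz)"

definition g_PFW :: "('a::real_inner) \<times> ('b::real_inner) \<Rightarrow> 'a \<times> 'b \<Rightarrow> 'a \<times> 'b \<Rightarrow> real" where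
  "g_PFW rz v s = (v - s) \<bullet> rz"

end

theory Submission
  imports Defs
begin

text \<open>
  Both bounds are proved one coordinate at a time, for the convex functions \<open>L(\<cdot>, y)\<close> and
  \<open>-L(x, \<cdot>)\<close>, and then added using \<open>p\<^sup>2 + q\<^sup>2 \<le> (p + q)\<^sup>2\<close> for the nonnegative coordinate
  gaps \<open>p, q\<close>. In each coordinate the infimum defining the strong convexity constant is
  evaluated at one well-chosen point: for \<open>\<mu>\<^sup>i\<^sup>n\<^sup>t\<close> at the step \<open>\<gamma>\<close> along the ray that lands exactly
  on the saddle point coordinate, for \<open>\<mu>\<^sup>A\<close> at the comparison point \<open>x'\<close> itself. This gives
  \<open>f x - f x' \<le> \<gamma> a - m \<gamma>\<^sup>2 / 2 \<le> a\<^sup>2 / (2 m)\<close>, where the decrease \<open>a\<close> of the linearisation is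
  dominated by the Frank-Wolfe gap (resp. the pairwise gap) of that coordinate.
\<close>

lemma quadratic_le_square_div:
  fixes \<gamma> a m :: real
  assumes "0 < m"
  shows "\<gamma> * a - m * \<gamma>\<^sup>2 / 2 \<le> a\<^sup>2 / (2 * m)"
proof -
  have "0 \<le> (a - m * \<gamma>)\<^sup>2" by simp
  thus ?thesis using assms by (simp add: field_simps power2_eq_square)
qed

lemma add_le_square_div:
  fixes a b p q m :: real
  assumes "a \<le> p\<^sup>2 / (2 * m)" "b \<le> q\<^sup>2 / (2 * m)" "0 \<le> p" "0 \<le> q" "0 < m"
  shows "a + b \<le> (p + q)\<^sup>2 / (2 * m)"
proof -
  have "p\<^sup>2 + q\<^sup>2 \<le> (p + q)\<^sup>2" using assms by (simp add: power2_sum)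
  hence "p\<^sup>2 / (2 * m) + q\<^sup>2 / (2 * m) \<le> (p + q)\<^sup>2 / (2 * m)"
    using assms by (simp add: add_divide_distrib[symmetric] divide_right_mono)
  thus ?thesis using assms by linarith
qed

lemma ereal_le_divide_of_real_bounds:
  fixes a c :: real and M :: ereal
  assumes "0 < M" "0 \<le> c" and bound: "\<And>m. 0 < m \<Longrightarrow> ereal m \<le> M \<Longrightarrow> a \<le> c / (2 * m)"
  shows "ereal a \<le> ereal c / (2 * M)"
proof (cases M)
  case (real r)
  thus ?thesis using assms bound[of r] by simp
next
  case PInf
  have "a \<le> 0"
  proof (rule ccontr)
    assume "\<not> a \<le> 0"
    hence a: "0 < a" by simp
    \<comment> \<open>for \<open>m = (c + 1) / a\<close> the bound reads \<open>a \<le> c a / (2 (c + 1)) < a\<close>\<close>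
    have "a \<le> c / (2 * ((c + 1) / a))"
      using bound[of "(c + 1) / a"] PInf a assms(2) by simp
    also have "\<dots> < a"
      using a assms(2) by (simp add: field_simps add_nonneg_pos)
    finally show False by simp
  qed
  thus ?thesis using PInf by simp
next
  case MInf
  thus ?thesis using assms by simp
qed

lemma has_derivative_le_of_chord_bound:
  fixes F :: "'a::real_normed_vector \<Rightarrow> real"
  assumes D: "(F has_derivative F') (at p)"
    and chord: "\<And>t. 0 < t \<Longrightarrow> t < 1 \<Longrightarrow> F (p + t *\<^sub>R d) \<le> F p + t * c"
  shows "F' d \<le> c"
proof -
  have "((\<lambda>t::real. p + t *\<^sub>R d) has_derivative (\<lambda>t. t *\<^sub>R d)) (at 0)"
    by (auto intro!: derivative_eq_intros)
  from has_derivative_compose[OF this, of F F'] D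
  have "((\<lambda>t::real. F (p + t *\<^sub>R d)) has_field_derivative F' d) (at 0)"
    using has_derivative_linear[OF D]
    by (simp add: has_field_derivative_def linear_scale mult_commute_abs)
  hence "((\<lambda>t. (F (p + t *\<^sub>R d) - F p) / t) \<longlongrightarrow> F' d) (at_right 0)"
    by (simp add: has_field_derivative_iff filterlim_at_split)
  moreover have "eventually (\<lambda>t. (F (p + t *\<^sub>R d) - F p) / t \<le> c) (at_right (0::real))"
    using eventually_at_right_real[of 0 1, simplified]
    by eventually_elim (use chord in \<open>fastforce simp: divide_le_eq mult.commute\<close>)
  ultimately show ?thesis by (simp add: tendsto_upperbound)
qed

lemma has_derivative_partial_fst:
  assumes "(f has_derivative f') (at (x, y))"
  shows "((\<lambda>a. f (a, y)) has_derivative (\<lambda>h. f' (h, 0))) (at x)"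
proof -
  have "((\<lambda>a. (a, y)) has_derivative (\<lambda>h. (h, 0))) (at x)"
    by (auto intro!: derivative_eq_intros)
  thus ?thesis using has_derivative_compose[of "\<lambda>a. (a, y)"] assms by fastforce
qed

lemma has_derivative_partial_snd:
  assumes "(f has_derivative f') (at (x, y))"
  shows "((\<lambda>b. f (x, b)) has_derivative (\<lambda>h. f' (0, h))) (at y)"
proof -
  have "((\<lambda>b. (x, b)) has_derivative (\<lambda>h. (0, h))) (at y)"
    by (auto intro!: derivative_eq_intros)
  thus ?thesis using has_derivative_compose[of "\<lambda>b. (x, b)"] assms by fastforce
qed

lemma strongly_convex_on_above_tangent:
  fixes f :: "'a::real_inner \<Rightarrow> real"
  assumes sc: "strongly_convex_on \<mu> K f" and "0 \<le> \<mu>"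
    and D: "(f has_derivative f') (at x)" and x: "x \<in> K" and x': "x' \<in> K"
  shows "f x + f' (x' - x) \<le> f x'"
proof -
  have "f' (x' - x) \<le> f x' - f x"
  proof (rule has_derivative_le_of_chord_bound[OF D])
    fix t :: real assume t: "0 < t" "t < 1"
    have "f (t *\<^sub>R x' + (1 - t) *\<^sub>R x)
        \<le> t * f x' + (1 - t) * f x - \<mu> / 2 * t * (1 - t) * (norm (x' - x))\<^sup>2"
      using sc x x' t unfolding strongly_convex_on_def by auto
    also have "\<dots> \<le> t * f x' + (1 - t) * f x"
      using \<open>0 \<le> \<mu>\<close> t by simp
    finally show "f (x + t *\<^sub>R (x' - x)) \<le> f x + t * (f x' - f x)"
      by (simp add: algebra_simps)
  qed
  thus ?thesis by simp
qed

lemma ray_exit_beyond: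
  fixes K :: "'a::real_normed_vector set"
  assumes K: "compact K" and x: "x \<in> K" and xc: "xc \<in> K" and "x \<noteq> xc"
  obtains \<gamma> where "ray_exit K x xc \<in> K" "0 < \<gamma>" "\<gamma> \<le> 1"
    "xc = x + \<gamma> *\<^sub>R (ray_exit K x xc - x)"
proof -
  define d where "d = xc - x"
  define S where "S = {t. 0 \<le> t \<and> x + t *\<^sub>R d \<in> K}"
  have "d \<noteq> 0" using \<open>x \<noteq> xc\<close> by (simp add: d_def)
  have one: "1 \<in> S" using xc by (simp add: S_def d_def)
  obtain B where B: "\<forall>k\<in>K. norm k \<le> B"
    using compact_imp_bounded[OF K] bounded_iff by blast
  have bdd: "bdd_above S"
  proof (rule bdd_aboveI)
    fix t assume "t \<in> S"
    hence t: "0 \<le> t" "x + t *\<^sub>R d \<in> K" by (auto simp: S_def)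
    have "t * norm d \<le> norm (x + t *\<^sub>R d) + norm x"
      using t(1) norm_triangle_ineq4[of "x + t *\<^sub>R d" x] by simp
    also have "\<dots> \<le> B + norm x" using B t by auto
    finally show "t \<le> (B + norm x) / norm d" using \<open>d \<noteq> 0\<close> by (simp add: field_simps)
  qed
  have "S = {0..} \<inter> (\<lambda>t. x + t *\<^sub>R d) -` K" by (auto simp: S_def)
  moreover have "closed ((\<lambda>t. x + t *\<^sub>R d) -` K)"
    by (rule continuous_closed_vimage[OF compact_imp_closed[OF K]]) (intro continuous_intros)
  ultimately have "closed S" by (simp add: closed_Int)
  hence "Sup S \<in> S" using closed_contains_Sup[OF _ bdd] one by blast
  moreover have "1 \<le> Sup S" using cSup_upper[OF one bdd] .
  moreover have "ray_exit K x xc = x + Sup S *\<^sub>R d"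
    by (simp add: ray_exit_def S_def d_def)
  ultimately show ?thesis
    by (intro that[of "1 / Sup S"]) (auto simp: S_def d_def)
qed

lemma mu_int_bound:
  fixes f :: "'a::real_inner \<Rightarrow> real"
  assumes K: "compact K" and x: "x \<in> K" and xc: "xc \<in> K"
    and m: "0 < m" "ereal m \<le> mu_int K f gf xc"
    and s: "s \<in> K" "\<forall>k\<in>K. s \<bullet> gf x \<le> k \<bullet> gf x"
  shows "f x - f xc \<le> ((x - s) \<bullet> gf x)\<^sup>2 / (2 * m)"
proof (cases "x = xc")
  case True
  thus ?thesis using m by simp
next
  case False
  then obtain \<gamma> where exit: "ray_exit K x xc \<in> K" and \<gamma>: "0 < \<gamma>" "\<gamma> \<le> 1"
    and xc_eq: "xc = x + \<gamma> *\<^sub>R (ray_exit K x xc - x)"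
    using ray_exit_beyond[OF K x xc] by blast
  define a where "a = (x - ray_exit K x xc) \<bullet> gf x"
  have step: "(xc - x) \<bullet> gf x = - \<gamma> * a"
    by (subst xc_eq) (simp add: a_def inner_diff_left algebra_simps)
  have "mu_int K f gf xc \<le> ereal (2 / \<gamma>\<^sup>2 * (f xc - f x - (xc - x) \<bullet> gf x))"
    unfolding mu_int_def by (rule Inf_lower) (use x False \<gamma> xc_eq in blast)
  with m(2) have "ereal m \<le> ereal (2 / \<gamma>\<^sup>2 * (f xc - f x - (xc - x) \<bullet> gf x))"
    by (rule order_trans)
  hence "m \<le> 2 / \<gamma>\<^sup>2 * (f xc - f x + \<gamma> * a)"
    by (simp only: ereal_less_eq step) simp
  hence "f x - f xc \<le> \<gamma> * a - m * \<gamma>\<^sup>2 / 2"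
    using \<gamma> by (simp add: field_simps)
  also have "\<dots> \<le> \<gamma> * max a 0 - m * \<gamma>\<^sup>2 / 2"
    using \<gamma> by (simp add: mult_left_mono)
  also have "\<dots> \<le> (max a 0)\<^sup>2 / (2 * m)"
    by (rule quadratic_le_square_div[OF m(1)])
  also have "\<dots> \<le> ((x - s) \<bullet> gf x)\<^sup>2 / (2 * m)"
    \<comment> \<open>\<open>s\<close> minimises the linear form over \<open>K\<close>, which contains both \<open>x\<close> and the exit point\<close>
    using s x exit m(1)
    by (intro divide_right_mono power_mono) (auto simp: a_def inner_diff_left)
  finally show ?thesis .
qed

text \<open>\<open>min_pairwise_gap A (\<nabla>f x) x\<close> is \<open>\<langle>\<nabla>f(x), v\<^sub>f(x) - s\<^sub>f(x)\<rangle>\<close>, the denominator of \<open>\<gamma>\<^sup>A\<close>.\<close>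

definition min_pairwise_gap :: "'a::real_inner set \<Rightarrow> 'a \<Rightarrow> 'a \<Rightarrow> real" where
  "min_pairwise_gap A g x =
     Min ((\<lambda>S. Max ((\<lambda>v. g \<bullet> v) ` S)) ` active_sets A x) - Min ((\<lambda>v. g \<bullet> v) ` A)"

lemma min_pairwise_gap_bounds:
  assumes A: "finite A" and S: "S \<in> active_sets A x" and v: "v \<in> S" "\<forall>v'\<in>S. v' \<bullet> g \<le> v \<bullet> g"
    and s: "\<forall>k\<in>A. s \<bullet> g \<le> k \<bullet> g"
  shows "0 \<le> min_pairwise_gap A g x" "min_pairwise_gap A g x \<le> (v - s) \<bullet> g"
proof -
  have fin: "finite (active_sets A x)"
    by (rule finite_subset[of _ "Pow A"]) (auto simp: active_sets_def A)
  have active: "\<And>S. S \<in> active_sets A x \<Longrightarrow> S \<subseteq> A \<and> S \<noteq> {} \<and> finite S"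
    using A by (auto simp: active_sets_def finite_subset)
  have "Min ((\<lambda>v. g \<bullet> v) ` A) \<le> Max ((\<lambda>v. g \<bullet> v) ` S')" if S': "S' \<in> active_sets A x" for S'
  proof -
    obtain u where "u \<in> S'" using active[OF S'] by blast
    hence "Min ((\<lambda>v. g \<bullet> v) ` A) \<le> g \<bullet> u \<and> g \<bullet> u \<le> Max ((\<lambda>v. g \<bullet> v) ` S')"
      using active[OF S'] A by auto
    thus ?thesis by linarith
  qed
  thus "0 \<le> min_pairwise_gap A g x"
    using fin S unfolding min_pairwise_gap_def by (subst diff_ge_0_iff_ge, subst Min_ge_iff) auto
  have "Min ((\<lambda>S. Max ((\<lambda>v. g \<bullet> v) ` S)) ` active_sets A x) \<le> Max ((\<lambda>v. g \<bullet> v) ` S)"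
    using fin S by simp
  also have "\<dots> = g \<bullet> v"
    using active[OF S] v by (intro Max_eqI) (auto simp: inner_commute)
  finally have "Min ((\<lambda>S. Max ((\<lambda>v. g \<bullet> v) ` S)) ` active_sets A x) \<le> g \<bullet> v" .
  moreover have "g \<bullet> s \<le> Min ((\<lambda>v. g \<bullet> v) ` A)"
    using s A active[OF S] by (subst Min_ge_iff) (auto simp: inner_commute)
  moreover have "(v - s) \<bullet> g = g \<bullet> v - g \<bullet> s"
    by (simp add: inner_commute inner_diff_right)
  ultimately show "min_pairwise_gap A g x \<le> (v - s) \<bullet> g"
    unfolding min_pairwise_gap_def by linarith
qed

lemma mu_geo_bound:
  fixes f :: "'a::real_inner \<Rightarrow> real"
  assumes x: "x \<in> convex hull A" and x': "x' \<in> convex hull A"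
    and m: "0 < m" "ereal m \<le> mu_geo A f gf"
    and tangent: "f x + gf x \<bullet> (x' - x) \<le> f x'"
  shows "f x - f x' \<le> (min_pairwise_gap A (gf x) x)\<^sup>2 / (2 * m)"
proof (cases "gf x \<bullet> (x' - x) < 0")
  case False
  hence "f x - f x' \<le> 0" using tangent by simp
  also have "0 \<le> (min_pairwise_gap A (gf x) x)\<^sup>2 / (2 * m)" using m(1) by simp
  finally show ?thesis .
next
  case True
  define D where "D = min_pairwise_gap A (gf x) x"
  define \<gamma> where "\<gamma> = gamma_A A gf x x'"
  define c where "c = - (gf x \<bullet> (x' - x))"
  have \<gamma>_eq: "\<gamma> = c / D" by (simp add: \<gamma>_def gamma_A_def c_def D_def min_pairwise_gap_def)
  have "mu_geo A f gf \<le> ereal (2 / \<gamma>\<^sup>2 * (f x' - f x - (x' - x) \<bullet> gf x))"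
    unfolding mu_geo_def \<gamma>_def by (rule Inf_lower) (use x x' True in blast)
  with m(2) have "ereal m \<le> ereal (2 / \<gamma>\<^sup>2 * (f x' - f x - (x' - x) \<bullet> gf x))"
    by (rule order_trans)
  hence bound: "m \<le> 2 / \<gamma>\<^sup>2 * (f x' - f x + c)"
    by (simp only: ereal_less_eq) (simp add: c_def inner_commute)
  \<comment> \<open>\<open>\<gamma> = 0\<close> (in particular when \<open>D = 0\<close>, as \<open>c / 0 = 0\<close>) would force \<open>m \<le> 0\<close>\<close>
  hence "\<gamma> \<noteq> 0" using m(1) by auto
  hence "c = \<gamma> * D" using \<gamma>_eq by auto
  hence "f x - f x' \<le> \<gamma> * D - m * \<gamma>\<^sup>2 / 2"
    using bound \<open>\<gamma> \<noteq> 0\<close> by (simp add: field_simps)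
  also have "\<dots> \<le> D\<^sup>2 / (2 * m)"
    by (rule quadratic_le_square_div[OF m(1)])
  finally show ?thesis by (simp add: D_def)
qed

lemma mu_geo_pairwise_bound:
  fixes f :: "'a::real_inner \<Rightarrow> real"
  assumes A: "finite A" and sc: "strongly_convex_on \<mu> (convex hull A) f" "0 \<le> \<mu>"
    and D: "(f has_derivative (\<lambda>h. gf x \<bullet> h)) (at x)"
    and x: "x \<in> convex hull A" and x': "x' \<in> convex hull A"
    and m: "0 < m" "ereal m \<le> mu_geo A f gf"
    and S: "S \<in> active_sets A x" and v: "v \<in> S" "\<forall>v'\<in>S. v' \<bullet> gf x \<le> v \<bullet> gf x"
    and s: "\<forall>k\<in>A. s \<bullet> gf x \<le> k \<bullet> gf x"
  shows "f x - f x' \<le> ((v - s) \<bullet> gf x)\<^sup>2 / (2 * m)"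
proof -
  have "f x + gf x \<bullet> (x' - x) \<le> f x'"
    using strongly_convex_on_above_tangent[OF sc D x x'] .
  hence "f x - f x' \<le> (min_pairwise_gap A (gf x) x)\<^sup>2 / (2 * m)"
    by (rule mu_geo_bound[OF x x' m])
  also have "\<dots> \<le> ((v - s) \<bullet> gf x)\<^sup>2 / (2 * m)"
    using min_pairwise_gap_bounds[OF A S v s] m(1)
    by (intro divide_right_mono power_mono) auto
  finally show ?thesis .
qed

lemma inner_r_op:
  "u \<bullet> r_op Gx Gy (x, y) = fst u \<bullet> Gx x y + snd u \<bullet> (- Gy x y)"
  by (simp add: r_op_def inner_prod_def)

lemma fw_vertex_components:
  assumes "is_fw_vertex X Y (g, h) s"
  shows "fst s \<in> X" "snd s \<in> Y" "\<forall>k\<in>X. fst s \<bullet> g \<le> k \<bullet> g" "\<forall>k\<in>Y. snd s \<bullet> h \<le> k \<bullet> h"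
proof -
  have s: "fst s \<in> X" "snd s \<in> Y" and min: "\<And>a b. a \<in> X \<Longrightarrow> b \<in> Y \<Longrightarrow>
      fst s \<bullet> g + snd s \<bullet> h \<le> a \<bullet> g + b \<bullet> h"
    using assms by (auto simp: is_fw_vertex_def inner_prod_def mem_Times_iff)
  show "fst s \<in> X" "snd s \<in> Y" by (fact s)+
  show "\<forall>k\<in>X. fst s \<bullet> g \<le> k \<bullet> g" using min[OF _ s(2)] by fastforce
  show "\<forall>k\<in>Y. snd s \<bullet> h \<le> k \<bullet> h" using min[OF s(1)] by fastforce
qed

lemma away_vertex_components:
  assumes "is_away_vertex Sx Sy (g, h) v"
  shows "fst v \<in> Sx" "snd v \<in> Sy" "\<forall>k\<in>Sx. k \<bullet> g \<le> fst v \<bullet> g" "\<forall>k\<in>Sy. k \<bullet> h \<le> snd v \<bullet> h"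
proof -
  have v: "fst v \<in> Sx" "snd v \<in> Sy" and max: "\<And>a b. a \<in> Sx \<Longrightarrow> b \<in> Sy \<Longrightarrow>
      a \<bullet> g + b \<bullet> h \<le> fst v \<bullet> g + snd v \<bullet> h"
    using assms by (auto simp: is_away_vertex_def inner_prod_def mem_Times_iff)
  show "fst v \<in> Sx" "snd v \<in> Sy" by (fact v)+
  show "\<forall>k\<in>Sx. k \<bullet> g \<le> fst v \<bullet> g" using max[OF _ v(2)] by fastforce
  show "\<forall>k\<in>Sy. k \<bullet> h \<le> snd v \<bullet> h" using max[OF v(1)] by fastforce
qed

lemma active_expansion_active_sets:
  assumes "active_expansion A B (x, y) Sx Sy \<alpha> \<beta>"
  shows "Sx \<in> active_sets A x" "Sy \<in> active_sets B y"
  using assms sum.empty[of \<alpha>] sum.empty[of \<beta>]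
  by (auto simp: active_expansion_def active_sets_def)

lemma h_gap_le:
  assumes "X \<noteq> {}" "Y \<noteq> {}"
    and "\<forall>x'\<in>X. L x y - L x' y \<le> a" "\<forall>y'\<in>Y. L x y' - L x y \<le> b"
  shows "h_gap X Y L (x, y) \<le> a + b"
proof -
  have "(SUP y'\<in>Y. L x y') \<le> L x y + b" using assms by (intro cSUP_least) auto
  moreover have "L x y - a \<le> (INF x'\<in>X. L x' y)" using assms by (intro cINF_greatest) auto
  ultimately show ?thesis by (simp add: h_gap_def)
qed

lemma w_gap_le_h_gap:
  assumes "xs \<in> X" "ys \<in> Y"
    and "\<forall>x'\<in>X. L x y - L x' y \<le> a" "\<forall>y'\<in>Y. L x y' - L x y \<le> b"
  shows "w_gap L xs ys (x, y) \<le> h_gap X Y L (x, y)"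
proof -
  have "L x ys \<le> (SUP y'\<in>Y. L x y')"
    using assms by (intro cSUP_upper bdd_aboveI2[where M = "L x y + b"]) auto
  moreover have "(INF x'\<in>X. L x' y) \<le> L xs y"
    using assms by (intro cINF_lower bdd_belowI2[where m = "L x y - a"]) auto
  ultimately show ?thesis by (simp add: w_gap_def h_gap_def)
qed

lemma w_gap_le_fw_gap_sq:
  fixes X :: "'a::real_inner set" and Y :: "'b::real_inner set"
  assumes X: "compact X" and Y: "compact Y" and xy: "x \<in> X" "y \<in> Y"
    and saddle: "xs \<in> X" "ys \<in> Y" and M: "0 < mu_int_L X Y L Gx Gy xs ys"
    and fw: "is_fw_vertex X Y (r_op Gx Gy (x, y)) s"
  shows "ereal (w_gap L xs ys (x, y))
    \<le> ereal ((g_FW (x, y) (r_op Gx Gy (x, y)) s)\<^sup>2) / (2 * mu_int_L X Y L Gx Gy xs ys)"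
proof -
  have "is_fw_vertex X Y (Gx x y, - Gy x y) s" using fw by (simp add: r_op_def)
  note s = fw_vertex_components[OF this]
  define gx where "gx = (x - fst s) \<bullet> Gx x y"
  define gy where "gy = (y - snd s) \<bullet> (- Gy x y)"
  have gaps: "0 \<le> gx" "0 \<le> gy"
    using s xy unfolding gx_def gy_def inner_diff_left by fastforce+
  have "g_FW (x, y) (r_op Gx Gy (x, y)) s = gx + gy"
    by (simp add: g_FW_def inner_r_op gx_def gy_def)
  moreover have "w_gap L xs ys (x, y) \<le> (gx + gy)\<^sup>2 / (2 * m)"
    if m: "0 < m" "ereal m \<le> mu_int_L X Y L Gx Gy xs ys" for m
  proof -
    have mX: "ereal m \<le> mu_int X (\<lambda>a. L a y) (\<lambda>a. Gx a y) xs"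
      and mY: "ereal m \<le> mu_int Y (\<lambda>b. - L x b) (\<lambda>b. - Gy x b) ys"
      using m(2) xy unfolding mu_int_L_def by (meson INF_lower min.boundedE order_trans)+
    have "L x y - L xs y \<le> gx\<^sup>2 / (2 * m)" "- L x y - - L x ys \<le> gy\<^sup>2 / (2 * m)"
      using mu_int_bound[OF X xy(1) saddle(1) m(1) mX s(1,3)]
        mu_int_bound[OF Y xy(2) saddle(2) m(1) mY s(2,4)]
      by (simp_all add: gx_def gy_def)
    from add_le_square_div[OF this gaps m(1)] show ?thesis by (simp add: w_gap_def)
  qed
  ultimately show ?thesis
    by (intro ereal_le_divide_of_real_bounds[OF M]) auto
qed

lemma h_gap_le_pfw_gap_sq:
  fixes X :: "'a::real_inner set" and Y :: "'b::real_inner set"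
  assumes A: "finite A" "X = convex hull A" and B: "finite B" "Y = convex hull B"
    and xy: "x \<in> X" "y \<in> Y" and saddle: "xs \<in> X" "ys \<in> Y"
    and D: "((\<lambda>p. L (fst p) (snd p)) has_derivative (\<lambda>h. Gx x y \<bullet> fst h + Gy x y \<bullet> snd h)) (at (x, y))"
    and sc_x: "strongly_convex_on \<mu>X X (\<lambda>a. L a y)" "0 \<le> \<mu>X"
    and sc_y: "strongly_convex_on \<mu>Y Y (\<lambda>b. - L x b)" "0 \<le> \<mu>Y"
    and M: "0 < mu_geo_L X Y A B L Gx Gy"
    and ae: "active_expansion A B (x, y) Sx Sy \<alpha> \<beta>"
    and away: "is_away_vertex Sx Sy (r_op Gx Gy (x, y)) v"
    and fw: "is_fw_vertex X Y (r_op Gx Gy (x, y)) s"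
  shows "w_gap L xs ys (x, y) \<le> h_gap X Y L (x, y)"
    and "ereal (h_gap X Y L (x, y))
      \<le> ereal ((g_PFW (r_op Gx Gy (x, y)) v s)\<^sup>2) / (2 * mu_geo_L X Y A B L Gx Gy)"
proof -
  have "is_fw_vertex X Y (Gx x y, - Gy x y) s" using fw by (simp add: r_op_def)
  note s = fw_vertex_components[OF this]
  have "is_away_vertex Sx Sy (Gx x y, - Gy x y) v" using away by (simp add: r_op_def)
  note v = away_vertex_components[OF this]
  note S = active_expansion_active_sets[OF ae]
  have sA: "\<forall>k\<in>A. fst s \<bullet> Gx x y \<le> k \<bullet> Gx x y" and sB: "\<forall>k\<in>B. snd s \<bullet> - Gy x y \<le> k \<bullet> - Gy x y"
    using s(3,4) hull_subset[of A convex] hull_subset[of B convex] A(2) B(2) by auto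
  define gx where "gx = (fst v - fst s) \<bullet> Gx x y"
  define gy where "gy = (snd v - snd s) \<bullet> (- Gy x y)"
  have gaps: "0 \<le> gx" "0 \<le> gy"
    using min_pairwise_gap_bounds[OF A(1) S(1) v(1,3) sA]
      min_pairwise_gap_bounds[OF B(1) S(2) v(2,4) sB]
    by (simp_all add: gx_def gy_def)
  have Dx: "((\<lambda>a. L a y) has_derivative (\<lambda>h. Gx x y \<bullet> h)) (at x)"
    using has_derivative_partial_fst[OF D] by simp
  have Dy: "((\<lambda>b. - L x b) has_derivative (\<lambda>h. - Gy x y \<bullet> h)) (at y)"
    using has_derivative_minus[OF has_derivative_partial_snd[OF D]] by simp
  have bounds: "(\<forall>x'\<in>X. L x y - L x' y \<le> gx\<^sup>2 / (2 * m))
      \<and> (\<forall>y'\<in>Y. L x y' - L x y \<le> gy\<^sup>2 / (2 * m))"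
    if m: "0 < m" "ereal m \<le> mu_geo_L X Y A B L Gx Gy" for m
  proof -
    have mX: "ereal m \<le> mu_geo A (\<lambda>a. L a y) (\<lambda>a. Gx a y)"
      and mY: "ereal m \<le> mu_geo B (\<lambda>b. - L x b) (\<lambda>b. - Gy x b)"
      using m(2) xy unfolding mu_geo_L_def by (meson INF_lower min.boundedE order_trans)+
    have "L x y - L x' y \<le> gx\<^sup>2 / (2 * m)" if "x' \<in> X" for x'
      using mu_geo_pairwise_bound[OF A(1) sc_x[unfolded A(2)] Dx xy(1)[unfolded A(2)]
          that[unfolded A(2)] m(1) mX S(1) v(1,3) sA]
      by (simp add: gx_def)
    moreover have "L x y' - L x y \<le> gy\<^sup>2 / (2 * m)" if "y' \<in> Y" for y'
      using mu_geo_pairwise_bound[OF B(1) sc_y[unfolded B(2)] Dy xy(2)[unfolded B(2)]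
          that[unfolded B(2)] m(1) mY S(2) v(2,4) sB]
      by (simp add: gy_def)
    ultimately show ?thesis by blast
  qed
  obtain m0 where "0 < m0" "ereal m0 \<le> mu_geo_L X Y A B L Gx Gy"
    using ereal_dense2[OF M] by (metis ereal_less(2) less_imp_le)
  from bounds[OF this] show "w_gap L xs ys (x, y) \<le> h_gap X Y L (x, y)"
    using w_gap_le_h_gap[OF saddle] by blast
  have "g_PFW (r_op Gx Gy (x, y)) v s = gx + gy"
    by (simp add: g_PFW_def inner_r_op gx_def gy_def)
  moreover have "h_gap X Y L (x, y) \<le> (gx + gy)\<^sup>2 / (2 * m)"
    if "0 < m" "ereal m \<le> mu_geo_L X Y A B L Gx Gy" for m
  proof -
    have "h_gap X Y L (x, y) \<le> gx\<^sup>2 / (2 * m) + gy\<^sup>2 / (2 * m)"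
      using h_gap_le[of X Y] bounds[OF that] xy by blast
    also have "\<dots> \<le> (gx + gy)\<^sup>2 / (2 * m)"
      using add_le_square_div[OF order_refl order_refl gaps \<open>0 < m\<close>] .
    finally show ?thesis .
  qed
  ultimately show "ereal (h_gap X Y L (x, y))
      \<le> ereal ((g_PFW (r_op Gx Gy (x, y)) v s)\<^sup>2) / (2 * mu_geo_L X Y A B L Gx Gy)"
    by (intro ereal_le_divide_of_real_bounds[OF M]) auto
qed

theorem lemma19:
  fixes X :: "'a::euclidean_space set" and Y :: "'b::euclidean_space set"
    and L :: "'a \<Rightarrow> 'b \<Rightarrow> real"
    and Gx :: "'a \<Rightarrow> 'b \<Rightarrow> 'a" and Gy :: "'a \<Rightarrow> 'b \<Rightarrow> 'b"
    and \<mu>X \<mu>Y :: real and xs :: 'a and ys :: 'b and z :: "'a \<times> 'b"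
  assumes X: "X \<noteq> {}" "convex X" "compact X"
    and Y: "Y \<noteq> {}" "convex Y" "compact Y"
    and diff: "\<And>a b. a \<in> X \<Longrightarrow> b \<in> Y \<Longrightarrow>
       ((\<lambda>p. L (fst p) (snd p)) has_derivative (\<lambda>h. Gx a b \<bullet> fst h + Gy a b \<bullet> snd h)) (at (a, b))"
    and mu: "\<mu>X > 0" "\<mu>Y > 0"
    and sc_x: "\<And>b. b \<in> Y \<Longrightarrow> strongly_convex_on \<mu>X X (\<lambda>a. L a b)"
    and sc_y: "\<And>a. a \<in> X \<Longrightarrow> strongly_convex_on \<mu>Y Y (\<lambda>b. - L a b)"
    and saddle: "saddle_point X Y L xs ys"
    and z: "z \<in> X \<times> Y"
  shows
   "((xs, ys) \<in> rel_interior (X \<times> Y) \<and> mu_int_L X Y L Gx Gy xs ys > 0 \<longrightarrow>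
       (\<forall>s. is_fw_vertex X Y (r_op Gx Gy z) s \<longrightarrow>
          ereal (w_gap L xs ys z)
            \<le> ereal ((g_FW z (r_op Gx Gy z) s)\<^sup>2) / (2 * mu_int_L X Y L Gx Gy xs ys)))
    \<and> (\<forall>A B. finite A \<and> finite B \<and> X = convex hull A \<and> Y = convex hull B \<and>
             mu_geo_L X Y A B L Gx Gy > 0 \<longrightarrow>
          (\<forall>Sx Sy \<alpha> \<beta> v s.
              active_expansion A B z Sx Sy \<alpha> \<beta> \<and>
              is_away_vertex Sx Sy (r_op Gx Gy z) v \<and>
              is_fw_vertex X Y (r_op Gx Gy z) s \<longrightarrow>
              w_gap L xs ys z \<le> h_gap X Y L z \<and>
              ereal (h_gap X Y L z)
                \<le> ereal ((g_PFW (r_op Gx Gy z) v s)\<^sup>2) / (2 * mu_geo_L X Y A B L Gx Gy)))"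
proof -
  obtain x y where xy: "z = (x, y)" "x \<in> X" "y \<in> Y" using z by auto
  have xs: "xs \<in> X" "ys \<in> Y" using saddle by (simp_all add: saddle_point_def)
  note pairwise = h_gap_le_pfw_gap_sq[where L = L and Gx = Gx and Gy = Gy,
      OF _ _ _ _ xy(2,3) xs diff[OF xy(2,3)] sc_x[OF xy(3)] less_imp_le[OF mu(1)]
      sc_y[OF xy(2)] less_imp_le[OF mu(2)]]
  show ?thesis
    unfolding xy(1)
    by (intro conjI impI allI; elim conjE;
        rule w_gap_le_fw_gap_sq[OF X(3) Y(3) xy(2,3) xs] pairwise; assumption)
qed

end
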